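(* Let $K$ be a field, $n\ge2$, regard $M_n(K)$ as a left $M_n(K)$-module via left multiplication, and for $X\in M_n(K)$ let $H_X=\{A\in M_n(K): \operatorname{Tr}(AX)=0\}$. Then for every $X\in M_n(K)$ and every choice of $\vartheta$: (i) if $\operatorname{char}K=0$ or $\operatorname{char}K=p>n$, then \[ \sigma_\vartheta(H_X)=\{Y\in M_n(K): YX=0\},\qquad \tau_\vartheta(H_X)=\{Y\in M_n(K): YX=0\ \text{or}\ YX=\lambda I_n\text{ for some }\lambda\in K\setminus\{0\}\}; \] (ii) if $\operatorname{char}K=p>0$ with $p\le n$, then $\sigma_\vartheta(H_X)=\tau_\vartheta(H_X)=\{Y\in M_n(K): YX=0\}$.
   Context: $I_n$ is the identity matrix and $\operatorname{Tr}$ the trace. For an associative unital algebra $\mathcal A$ over a field $K$, the symbol $\vartheta$ ranges over "left", "right", "pre-two-sided", "two-sided". A subspace $J\subseteq\mathcal A$ is a left (resp. right; two-sided) Mathieu subspace of $\mathcal A$ if whenever $a\in\mathcal A$ satisfies $a^m\in J$ for all $m\ge1$, then for all $b,c\in\mathcal A$ there is $N_0$ with $ba^m\in J$ (resp. $a^mc\in J$; $ba^mc\in J$) for all $m\ge N_0$; pre-two-sided means both left and right. A $\vartheta$-ideal means a left/right/two-sided ideal accordingly, and a two-sided ideal for $\vartheta$ = pre-two-sided. For a left $\mathcal A$-module $\mathcal M$, $u\in\mathcal M$, $N\subseteq \mathcal M$, $(N:u)=\{a\in\mathcal A: au\in N\}$; for a subspace $N$, $\sigma_\vartheta(N)=\{u\in\mathcal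 M: (N:u)\text{ is a }\vartheta\text{-ideal of }\mathcal A\}$, $\tau_\vartheta(N)=\{u\in\mathcal M: (N:u)\text{ is a }\vartheta\text{-Mathieu subspace of }\mathcal A\}$. *)

theory Defs
  imports "HOL-Analysis.Analysis"
begin

definition msmult :: "'a::field \<Rightarrow> 'a^'n^'n \<Rightarrow> 'a^'n^'n" where
  "msmult c A = (\<chi> i j. c * A$i$j)"

primrec matpow :: "'a::field^'n^'n \<Rightarrow> nat \<Rightarrow> 'a^'n^'n" where
  "matpow a 0 = mat 1"
| "matpow a (Suc m) = a ** matpow a m"

definition msubspace :: "('a::field^'n^'n) set \<Rightarrow> bool" where
  "msubspace J \<longleftrightarrow> 0 \<in> J \<and> (\<forall>x\<in>J. \<forall>y\<in>J. x + y \<in> J) \<and> (\<forall>c x. x \<in> J \<longrightarrow> msmult c x \<in> J)"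

datatype theta = Left | Right | PreTwoSided | TwoSided

definition left_ideal :: "('a::field^'n^'n) set \<Rightarrow> bool" where
  "left_ideal J \<longleftrightarrow> msubspace J \<and> (\<forall>b a. a \<in> J \<longrightarrow> b ** a \<in> J)"

definition right_ideal :: "('a::field^'n^'n) set \<Rightarrow> bool" where
  "right_ideal J \<longleftrightarrow> msubspace J \<and> (\<forall>a c. a \<in> J \<longrightarrow> a ** c \<in> J)"

definition twosided_ideal :: "('a::field^'n^'n) set \<Rightarrow> bool" where
  "twosided_ideal J \<longleftrightarrow> msubspace J \<and> (\<forall>b a c. a \<in> J \<longrightarrow> b ** a ** c \<in> J)"

fun theta_ideal :: "theta \<Rightarrow> ('a::field^'n^'n) set \<Rightarrow> bool" where
  "theta_ideal Left J = left_ideal J"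
| "theta_ideal Right J = right_ideal J"
| "theta_ideal PreTwoSided J = twosided_ideal J"
| "theta_ideal TwoSided J = twosided_ideal J"

definition left_mathieu :: "('a::field^'n^'n) set \<Rightarrow> bool" where
  "left_mathieu J \<longleftrightarrow> msubspace J \<and>
     (\<forall>a. (\<forall>m\<ge>1. matpow a m \<in> J) \<longrightarrow>
        (\<forall>b. \<exists>N0. \<forall>m\<ge>N0. b ** matpow a m \<in> J))"

definition right_mathieu :: "('a::field^'n^'n) set \<Rightarrow> bool" where
  "right_mathieu J \<longleftrightarrow> msubspace J \<and>
     (\<forall>a. (\<forall>m\<ge>1. matpow a m \<in> J) \<longrightarrow>
        (\<forall>c. \<exists>N0. \<forall>m\<ge>N0. matpow a m ** c \<in> J))"

definition twosided_mathieu :: "('a::field^'n^'n) set \<Rightarrow> bool" where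
  "twosided_mathieu J \<longleftrightarrow> msubspace J \<and>
     (\<forall>a. (\<forall>m\<ge>1. matpow a m \<in> J) \<longrightarrow>
        (\<forall>b c. \<exists>N0. \<forall>m\<ge>N0. b ** matpow a m ** c \<in> J))"

fun theta_mathieu :: "theta \<Rightarrow> ('a::field^'n^'n) set \<Rightarrow> bool" where
  "theta_mathieu Left J = left_mathieu J"
| "theta_mathieu Right J = right_mathieu J"
| "theta_mathieu PreTwoSided J = (left_mathieu J \<and> right_mathieu J)"
| "theta_mathieu TwoSided J = twosided_mathieu J"

text \<open>M_n(K) as left module over itself: (N:u) = {a. a u \<in> N}.\<close>
definition colon :: "('a::field^'n^'n) set \<Rightarrow> 'a^'n^'n \<Rightarrow> ('a^'n^'n) set" where
  "colon N u = {a. a ** u \<in> N}"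

definition sigma_theta :: "theta \<Rightarrow> ('a::field^'n^'n) set \<Rightarrow> ('a^'n^'n) set" where
  "sigma_theta th N = {u. theta_ideal th (colon N u)}"

definition tau_theta :: "theta \<Rightarrow> ('a::field^'n^'n) set \<Rightarrow> ('a^'n^'n) set" where
  "tau_theta th N = {u. theta_mathieu th (colon N u)}"

definition HX :: "'a::field^'n^'n \<Rightarrow> ('a^'n^'n) set" where
  "HX X = {A. trace (A ** X) = 0}"

end

theory Submission
  imports Defs
begin

(*
  For a left multiplier Y the colon set (H_X : Y) is the hyperplane
  trace_perp (Y X) = {A. tr (A (Y X)) = 0}, so everything reduces to deciding, for a
  single matrix Z, when trace_perp Z is a theta-ideal and when it is a theta-Mathieu
  subspace.

  Ideals: if trace_perp Z is a left ideal then tr (A Z) = 0 forces A Z = 0, because the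
  trace form is nondegenerate; for Z <> 0 and n >= 2 an explicit combination of two
  matrix units violates this.  Right ideals follow by transposition.

  Mathieu subspaces: an idempotent e in J with b e outside J shows that J is not left
  Mathieu.  A nonscalar Z admits a rank-one idempotent u v^T with tr (e Z) = 0 but
  e Z <> 0; if 0 < char K = p <= n, a diagonal idempotent of rank p works for the
  nonzero scalars Z = c I.  Conversely, in characteristic 0 or > n a matrix all of
  whose powers have trace zero is nilpotent (Fitting-type argument: a power relation
  among A^0, ..., A^(n^2) yields A^k = A^k A R with R a polynomial in A, so (A R)^k is
  an idempotent of trace 0, hence of rank 0), which makes trace_perp (c I) Mathieu
  of every kind.
*)

lemma matpow_add: "matpow A (m + n) = matpow A m ** matpow A n"
  by (induction m) (simp_all add: matrix_mul_assoc)

lemma matrix_add_rdistrib: "(B + C) ** A = B ** A + C ** A"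
  by (simp add: matrix_matrix_mult_def vec_eq_iff sum.distrib algebra_simps)

lemma matrix_mul_sum_right: "M ** sum f I = (\<Sum>i\<in>I. M ** f i)"
  by (induction I rule: infinite_finite_induct) (simp_all add: matrix_add_ldistrib)

lemma msmult_index: "msmult c A $ i $ j = c * A $ i $ j"
  by (simp add: msmult_def)

lemma msmult_zero: "msmult 0 M = 0"
  by (simp add: msmult_def vec_eq_iff)

lemma msmult_one: "msmult 1 M = M"
  by (simp add: msmult_def vec_eq_iff)

lemma msmult_minus_one: "msmult (- 1) M = - M"
  by (simp add: msmult_def vec_eq_iff)

lemma msmult_neg: "msmult c (- M) = msmult (- c) M"
  by (simp add: msmult_def vec_eq_iff)

lemma msmult_msmult: "msmult c (msmult d M) = msmult (c * d) M"
  by (simp add: msmult_def vec_eq_iff mult.assoc)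

lemma msmult_mult_left: "msmult c A ** B = msmult c (A ** B)"
  by (simp add: msmult_def matrix_matrix_mult_def vec_eq_iff sum_distrib_left mult.assoc)

lemma msmult_mult_right: "A ** msmult c B = msmult c (A ** B)"
  by (simp add: msmult_def matrix_matrix_mult_def vec_eq_iff sum_distrib_left algebra_simps)

lemma mult_mat_eq_msmult: "A ** mat c = msmult c A"
  by (simp add: matrix_matrix_mult_def mat_def msmult_def vec_eq_iff if_distrib mult.commute
      cong: if_cong)

lemma mat_mult_eq_msmult: "mat c ** A = msmult c A"
  by (simp add: matrix_matrix_mult_def mat_def msmult_def vec_eq_iff if_distrib[of "\<lambda>x. x * _"]
      cong: if_cong)

lemma trace_msmult: "trace (msmult c A) = c * trace A"
  by (simp add: msmult_def trace_def sum_distrib_left)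

lemma trace_transpose: "trace (transpose M) = trace M"
  by (simp add: trace_def transpose_def)

lemma transpose_zero: "transpose 0 = 0"
  by (simp add: transpose_def vec_eq_iff)

lemma column_mult: "column j (A ** B) = A *v column j B"
  by (simp add: column_def matrix_matrix_mult_def matrix_vector_mult_def vec_eq_iff)

(* Matrix units; multiplying by them extracts single entries, which makes the trace
   form (A, B) |-> tr (A B) nondegenerate. *)

definition unit_mat :: "'n \<Rightarrow> 'n \<Rightarrow> 'a::field^'n^'n" where
  "unit_mat k l = (\<chi> i j. if i = k \<and> j = l then 1 else 0)"

lemma unit_mat_mult: "(unit_mat k l ** M) $ i $ j = (if i = k then M $ l $ j else 0)"
proof -
  have "(unit_mat k l ** M) $ i $ j = (\<Sum>r\<in>UNIV. if i = k \<and> r = l then M $ r $ j else 0)"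
    by (simp add: unit_mat_def matrix_matrix_mult_def if_distrib[of "\<lambda>x. x * _"] cong: if_cong)
  then show ?thesis by simp
qed

lemma trace_unit_mat_mult: "trace (unit_mat k l ** M) = M $ l $ k"
  by (simp add: trace_def unit_mat_mult)

lemma trace_form_nondegenerate:
  fixes M :: "'a::field^'n^'n"
  assumes "\<And>B. trace (B ** M) = 0"
  shows "M = 0"
  using assms[of "unit_mat _ _"] by (simp add: trace_unit_mat_mult vec_eq_iff)

definition trace_perp :: "'a::field^'n^'n \<Rightarrow> ('a^'n^'n) set" where
  "trace_perp Z = {A. trace (A ** Z) = 0}"

lemma colon_HX: "colon (HX X) Y = trace_perp (Y ** X)"
  by (simp add: colon_def HX_def trace_perp_def matrix_mul_assoc)

lemma msubspace_trace_perp: "msubspace (trace_perp Z)"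
  by (simp add: msubspace_def trace_perp_def matrix_add_rdistrib trace_add msmult_mult_left
      trace_msmult trace_0[simplified])

lemma trace_perp_0: "trace_perp 0 = UNIV"
  by (simp add: trace_perp_def trace_0[simplified])

lemma trace_perp_mat: "c \<noteq> 0 \<Longrightarrow> trace_perp (mat c) = {A. trace A = 0}"
  by (simp add: trace_perp_def mult_mat_eq_msmult trace_msmult)

(* If trace_perp Z is a left (right) ideal, its elements annihilate Z from the left
   (right), by nondegeneracy of the trace form. *)

lemma left_ideal_trace_perp_annihilates:
  fixes Z :: "'a::field^'n^'n"
  assumes "left_ideal (trace_perp Z)" and "trace (A ** Z) = 0"
  shows "A ** Z = 0"
proof (rule trace_form_nondegenerate)
  fix B :: "'a::field^'n^'n"
  have "B ** A \<in> trace_perp Z"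
    using assms unfolding left_ideal_def trace_perp_def by blast
  then show "trace (B ** (A ** Z)) = 0"
    by (simp add: trace_perp_def matrix_mul_assoc)
qed

lemma right_ideal_trace_perp_annihilates:
  fixes Z :: "'a::field^'n^'n"
  assumes "right_ideal (trace_perp Z)" and "trace (A ** Z) = 0"
  shows "Z ** A = 0"
proof (rule trace_form_nondegenerate)
  fix C :: "'a::field^'n^'n"
  have "A ** C \<in> trace_perp Z"
    using assms unfolding right_ideal_def trace_perp_def by blast
  moreover have "trace (C ** (Z ** A)) = trace (A ** (C ** Z))"
    using trace_mul_sym[of "C ** Z" A] by (simp add: matrix_mul_assoc)
  ultimately show "trace (C ** (Z ** A)) = 0"
    by (simp add: trace_perp_def matrix_mul_assoc)
qed

lemma exists_other_index:
  assumes "CARD('n) \<ge> 2"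
  obtains m :: 'n where "m \<noteq> j"
proof -
  have "UNIV \<noteq> {j}"
  proof
    assume "UNIV = {j}"
    then have "CARD('n) = 1" by (auto simp: card_1_singleton_iff)
    with assms show False by simp
  qed
  then show ?thesis using that by blast
qed

(* For Z <> 0 and n >= 2 some A with tr (A Z) = 0 still has A Z <> 0: if Z_ij <> 0
   and m <> j, take A = Z_ij E_mi - Z_im E_ji. *)

lemma trace_perp_not_left_annihilated:
  fixes Z :: "'a::field^'n^'n"
  assumes "CARD('n) \<ge> 2" and "Z \<noteq> 0"
  shows "\<exists>A. trace (A ** Z) = 0 \<and> A ** Z \<noteq> 0"
proof -
  obtain i j where Zij: "Z $ i $ j \<noteq> 0"
    using assms(2) by (auto simp: vec_eq_iff)
  obtain m where "m \<noteq> j" using exists_other_index[OF assms(1)] .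
  define A where "A = msmult (Z $ i $ j) (unit_mat m i) + msmult (- Z $ i $ m) (unit_mat j i)"
  have "trace (A ** Z) = 0"
    by (simp add: A_def matrix_add_rdistrib msmult_mult_left trace_add trace_msmult
        trace_unit_mat_mult)
  moreover have "(A ** Z) $ m $ j \<noteq> 0"
    using \<open>m \<noteq> j\<close> Zij
    by (simp add: A_def matrix_add_rdistrib msmult_mult_left msmult_index unit_mat_mult)
  then have "A ** Z \<noteq> 0" by auto
  ultimately show ?thesis by blast
qed

(* The same with A acting on the right, obtained by transposing. *)

lemma trace_perp_not_right_annihilated:
  fixes Z :: "'a::field^'n^'n"
  assumes "CARD('n) \<ge> 2" and "Z \<noteq> 0"
  shows "\<exists>A. trace (A ** Z) = 0 \<and> Z ** A \<noteq> 0"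
proof -
  have "transpose Z \<noteq> 0"
  proof
    assume "transpose Z = 0"
    then have "transpose (transpose Z) = transpose 0" by (rule arg_cong)
    with assms(2) show False by (simp add: transpose_zero)
  qed
  then obtain A where A: "trace (A ** transpose Z) = 0" "A ** transpose Z \<noteq> 0"
    using trace_perp_not_left_annihilated[OF assms(1)] by blast
  have "trace (transpose A ** Z) = trace (transpose (transpose Z ** A))"
    by (simp add: matrix_transpose_mul)
  also have "\<dots> = trace (A ** transpose Z)"
    by (simp add: trace_transpose trace_mul_sym[of "transpose Z" A])
  finally have "trace (transpose A ** Z) = 0"
    using A(1) by simp
  moreover have "Z ** transpose A \<noteq> 0"
  proof
    assume "Z ** transpose A = 0"
    then have "transpose (Z ** transpose A) = 0" by (simp add: transpose_zero)
    with A(2) show False by (simp add: matrix_transpose_mul)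
  qed
  ultimately show ?thesis by blast
qed

(* Idempotents obstruct the Mathieu property: all powers of e equal e, so e in J
   forces b e^m = b e into J for large m. *)

lemma idempotent_matpow: "e ** e = e \<Longrightarrow> m \<ge> 1 \<Longrightarrow> matpow e m = e"
proof (induction m)
  case (Suc m)
  then show ?case by (cases m) auto
qed simp

lemma idempotent_not_left_mathieu:
  fixes J :: "('a::field^'n^'n) set"
  assumes idem: "e ** e = e" and "e \<in> J" and "b ** e \<notin> J"
  shows "\<not> left_mathieu J"
proof
  assume "left_mathieu J"
  then have "\<forall>a. (\<forall>m\<ge>1. matpow a m \<in> J) \<longrightarrow> (\<forall>b. \<exists>N. \<forall>m\<ge>N. b ** matpow a m \<in> J)"
    by (simp add: left_mathieu_def)
  moreover have "\<forall>m\<ge>1. matpow e m \<in> J"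
    using assms(2) idempotent_matpow[OF idem] by simp
  ultimately obtain N where "\<forall>m\<ge>N. b ** matpow e m \<in> J"
    by blast
  then have "b ** matpow e (Suc N) \<in> J" by (simp del: matpow.simps)
  then show False
    using assms(3) idempotent_matpow[OF idem, of "Suc N"] by simp
qed

lemma idempotent_not_right_mathieu:
  fixes J :: "('a::field^'n^'n) set"
  assumes idem: "e ** e = e" and "e \<in> J" and "e ** c \<notin> J"
  shows "\<not> right_mathieu J"
proof
  assume "right_mathieu J"
  then have "\<forall>a. (\<forall>m\<ge>1. matpow a m \<in> J) \<longrightarrow> (\<forall>c. \<exists>N. \<forall>m\<ge>N. matpow a m ** c \<in> J)"
    by (simp add: right_mathieu_def)
  moreover have "\<forall>m\<ge>1. matpow e m \<in> J"
    using assms(2) idempotent_matpow[OF idem] by simp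
  ultimately obtain N where "\<forall>m\<ge>N. matpow e m ** c \<in> J"
    by blast
  then have "matpow e (Suc N) ** c \<in> J" by (simp del: matpow.simps)
  then show False
    using assms(3) idempotent_matpow[OF idem, of "Suc N"] by simp
qed

lemma trace_perp_not_left_mathieu:
  fixes Z :: "'a::field^'n^'n"
  assumes "e ** e = e" and "trace (e ** Z) = 0" and "e ** Z \<noteq> 0"
  shows "\<not> left_mathieu (trace_perp Z)"
proof -
  obtain b where "trace (b ** (e ** Z)) \<noteq> 0"
    using trace_form_nondegenerate assms(3) by auto
  with assms(2) have "e \<in> trace_perp Z" and "b ** e \<notin> trace_perp Z"
    by (simp_all add: trace_perp_def matrix_mul_assoc)
  then show ?thesis
    by (rule idempotent_not_left_mathieu[OF assms(1)])
qed

lemma trace_perp_not_right_mathieu: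
  fixes Z :: "'a::field^'n^'n"
  assumes "e ** e = e" and "trace (e ** Z) = 0" and "Z ** e \<noteq> 0"
  shows "\<not> right_mathieu (trace_perp Z)"
proof -
  obtain c where c: "trace (c ** (Z ** e)) \<noteq> 0"
    using trace_form_nondegenerate assms(3) by auto
  have "trace (e ** c ** Z) = trace (c ** (Z ** e))"
    using trace_mul_sym[of e "c ** Z"] by (simp add: matrix_mul_assoc)
  with assms(2) c have "e \<in> trace_perp Z" and "e ** c \<notin> trace_perp Z"
    by (simp_all add: trace_perp_def)
  then show ?thesis
    by (rule idempotent_not_right_mathieu[OF assms(1)])
qed

(* Rank-one matrices u v^T.  With the bilinear pairing dotp, u v^T is idempotent when
   dotp v u = 1, and (u v^T) Z = u (v^T Z). *)

definition dotp :: "'a::field^'n \<Rightarrow> 'a^'n \<Rightarrow> 'a" where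
  "dotp x y = (\<Sum>i\<in>UNIV. x $ i * y $ i)"

definition outer :: "'a::field^'n \<Rightarrow> 'a^'n \<Rightarrow> 'a^'n^'n" where
  "outer u v = (\<chi> i j. u $ i * v $ j)"

lemma dotp_add_left: "dotp (x + y) z = dotp x z + dotp y z"
  by (simp add: dotp_def sum.distrib algebra_simps)

lemma dotp_diff_right: "dotp x (y - z) = dotp x y - dotp x z"
  by (simp add: dotp_def sum_subtractf algebra_simps)

lemma dotp_scale_right: "dotp x (c *s y) = c * dotp x y"
  by (simp add: dotp_def sum_distrib_left mult_ac)

lemma dotp_axis_left: "dotp (axis i 1) y = y $ i"
  by (simp add: dotp_def axis_def if_distrib[of "\<lambda>x. x * _"] cong: if_cong)

lemma dotp_axis_right: "dotp x (axis i 1) = x $ i"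
  by (simp add: dotp_def axis_def if_distrib[of "\<lambda>y. _ * y"] cong: if_cong)

lemma axis_nth_other: "j \<noteq> i \<Longrightarrow> axis i x $ j = 0"
  by (simp add: axis_def)

lemma axis_vector_matrix_mult: "axis i 1 v* Z = Z $ i"
  by (simp add: vector_matrix_mult_def axis_def vec_eq_iff if_distrib[of "\<lambda>x. x * _"] cong: if_cong)

lemma vector_matrix_mult_add_left: "(x + y) v* A = x v* A + y v* A"
  by (simp add: vector_matrix_mult_def vec_eq_iff sum.distrib algebra_simps)

lemma outer_mult_outer: "outer u v ** outer u' v' = msmult (dotp v u') (outer u v')"
  by (simp add: outer_def matrix_matrix_mult_def msmult_def dotp_def vec_eq_iff
      sum_distrib_left sum_distrib_right mult_ac)

lemma outer_mult: "outer u v ** Z = outer u (v v* Z)"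
  by (simp add: outer_def matrix_matrix_mult_def vector_matrix_mult_def vec_eq_iff
      sum_distrib_left mult_ac)

lemma trace_outer: "trace (outer u v) = dotp v u"
  by (simp add: trace_def outer_def dotp_def mult.commute)

lemma outer_nonzero: "u \<noteq> 0 \<Longrightarrow> w \<noteq> 0 \<Longrightarrow> outer u w \<noteq> 0"
  by (simp add: outer_def vec_eq_iff)

(* The vectors needed for the rank-one idempotent: dotp v u = 1, dotp (v^T Z) u = 0 and
   v^T Z <> 0.  First case: Z has a nonzero off-diagonal entry Z_ij; take v = e_i and
   u = e_i - (Z_ii / Z_ij) e_j. *)

lemma rank_one_data_offdiagonal:
  fixes Z :: "'a::field^'n^'n"
  assumes "i \<noteq> j" and Zij: "Z $ i $ j \<noteq> 0"
  shows "\<exists>u v. dotp v u = 1 \<and> dotp (v v* Z) u = 0 \<and> v v* Z \<noteq> 0"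
proof -
  define u where "u = axis i 1 + (- Z $ i $ i / Z $ i $ j) *s axis j (1::'a)"
  have "dotp (axis i 1) u = 1"
    using assms(1) by (simp add: u_def dotp_axis_left axis_nth_other)
  moreover have "dotp (axis i 1 v* Z) u = 0"
    using Zij by (simp add: u_def axis_vector_matrix_mult dotp_diff_right dotp_scale_right
        dotp_axis_right)
  moreover have "axis i 1 v* Z \<noteq> 0"
    using Zij by (auto simp: axis_vector_matrix_mult)
  ultimately show ?thesis by blast
qed

(* Second case: Z is diagonal with Z_ii <> Z_jj; take v = e_i + e_j and u the
   combination of e_i, e_j with coefficient sum 1 on which Z_ii, Z_jj pair to 0. *)

lemma rank_one_data_diagonal:
  fixes Z :: "'a::field^'n^'n"
  assumes diag: "\<And>a b. a \<noteq> b \<Longrightarrow> Z $ a $ b = 0" and Zii: "Z $ i $ i \<noteq> Z $ j $ j"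
  shows "\<exists>u v. dotp v u = 1 \<and> dotp (v v* Z) u = 0 \<and> v v* Z \<noteq> 0"
proof -
  have ij: "i \<noteq> j" using Zii by blast
  define d where "d = Z $ j $ j - Z $ i $ i"
  have "d \<noteq> 0" using Zii by (simp add: d_def)
  define v :: "'a^'n" where "v = axis i 1 + axis j 1"
  define u where "u = (Z $ j $ j / d) *s axis i 1 + (- Z $ i $ i / d) *s axis j (1::'a)"
  have vZ: "v v* Z = Z $ i + Z $ j"
    by (simp add: v_def vector_matrix_mult_add_left axis_vector_matrix_mult)
  have "dotp v u = (Z $ j $ j - Z $ i $ i) / d"
    using ij by (simp add: v_def u_def dotp_add_left dotp_axis_left axis_nth_other diff_divide_distrib)
  then have "dotp v u = 1"
    using \<open>d \<noteq> 0\<close> by (simp add: d_def)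
  moreover have "dotp (v v* Z) u = 0"
    using ij diag[OF ij] diag[OF ij[symmetric]]
    by (simp add: vZ u_def dotp_add_left dotp_diff_right dotp_scale_right dotp_axis_right
        field_simps)
  moreover have "v v* Z \<noteq> 0"
  proof
    assume "v v* Z = 0"
    then have "(Z $ i + Z $ j) $ i = 0" and "(Z $ i + Z $ j) $ j = 0"
      by (simp_all add: vZ)
    then show False
      using Zii diag[OF ij] diag[OF ij[symmetric]] by simp
  qed
  ultimately show ?thesis by blast
qed

lemma diagonal_constant_is_scalar:
  fixes Z :: "'a::field^'n^'n"
  assumes "\<And>a b. a \<noteq> b \<Longrightarrow> Z $ a $ b = 0" and "\<And>a b. Z $ a $ a = Z $ b $ b"
  shows "Z = mat (Z $ k $ k)"
  using assms by (simp add: vec_eq_iff mat_def)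

lemma nonscalar_rank_one_data:
  fixes Z :: "'a::field^'n^'n"
  assumes "\<And>c. Z \<noteq> mat c"
  shows "\<exists>u v. dotp v u = 1 \<and> dotp (v v* Z) u = 0 \<and> v v* Z \<noteq> 0"
proof (cases "\<exists>i j. i \<noteq> j \<and> Z $ i $ j \<noteq> 0")
  case True
  then show ?thesis using rank_one_data_offdiagonal by blast
next
  case False
  then have diag: "\<And>a b. a \<noteq> b \<Longrightarrow> Z $ a $ b = 0" by blast
  then obtain i j where "Z $ i $ i \<noteq> Z $ j $ j"
    using diagonal_constant_is_scalar assms by blast
  then show ?thesis using rank_one_data_diagonal diag by blast
qed

lemma nonscalar_left_idempotent:
  fixes Z :: "'a::field^'n^'n"
  assumes "\<And>c. Z \<noteq> mat c"
  shows "\<exists>e. e ** e = e \<and> trace (e ** Z) = 0 \<and> e ** Z \<noteq> 0"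
proof -
  obtain u v where uv: "dotp v u = 1" "dotp (v v* Z) u = 0" "v v* Z \<noteq> 0"
    using nonscalar_rank_one_data assms by blast
  have "u \<noteq> 0" using uv(1) by (auto simp: dotp_def)
  have "outer u v ** outer u v = outer u v"
    using uv(1) by (simp add: outer_mult_outer msmult_one)
  moreover have "trace (outer u v ** Z) = 0"
    using uv(2) by (simp add: outer_mult trace_outer)
  moreover have "outer u v ** Z \<noteq> 0"
    using uv(3) \<open>u \<noteq> 0\<close> by (simp add: outer_mult outer_nonzero)
  ultimately show ?thesis by blast
qed

lemma nonscalar_right_idempotent:
  fixes Z :: "'a::field^'n^'n"
  assumes "\<And>c. Z \<noteq> mat c"
  shows "\<exists>e. e ** e = e \<and> trace (e ** Z) = 0 \<and> Z ** e \<noteq> 0"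
proof -
  have "transpose Z \<noteq> mat c" for c
  proof
    assume "transpose Z = mat c"
    then have "transpose (transpose Z) = transpose (mat c)" by (rule arg_cong)
    with assms show False by simp
  qed
  then obtain e where e: "e ** e = e" "trace (e ** transpose Z) = 0" "e ** transpose Z \<noteq> 0"
    using nonscalar_left_idempotent by blast
  have "transpose e ** transpose e = transpose e"
    using e(1) by (simp flip: matrix_transpose_mul)
  moreover have "trace (transpose e ** Z) = 0"
    using e(2) trace_transpose[of "transpose Z ** e"]
    by (simp add: matrix_transpose_mul trace_mul_sym[of "transpose Z"])
  moreover have "Z ** transpose e \<noteq> 0"
  proof
    assume "Z ** transpose e = 0"
    then have "transpose (Z ** transpose e) = 0" by (simp add: transpose_zero)
    with e(3) show False by (simp add: matrix_transpose_mul)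
  qed
  ultimately show ?thesis by blast
qed

(* In characteristic p with 0 < p <= n the diagonal projection onto p coordinates is a
   nonzero idempotent of trace p = 0. *)

lemma small_char_idempotent:
  assumes "0 < CHAR('a::field)" and "CHAR('a) \<le> CARD('n)"
  shows "\<exists>e :: 'a^'n^'n. e ** e = e \<and> trace e = 0 \<and> e \<noteq> 0"
proof -
  obtain S :: "'n set" where S: "card S = CHAR('a)"
    using obtain_subset_with_card_n[of "CHAR('a)" "UNIV :: 'n set"] assms(2) by auto
  then obtain s where "s \<in> S" using assms(1) by fastforce
  define D :: "'a^'n^'n" where "D = (\<chi> i j. if i = j \<and> i \<in> S then 1 else 0)"
  have "D ** M = (\<chi> i j. if i \<in> S then M $ i $ j else 0)" for M :: "'a^'n^'n"
    by (simp add: D_def matrix_matrix_mult_def vec_eq_iff if_distrib[of "\<lambda>x. x * _"]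
        cong: if_cong)
  then have "D ** D = D"
    by (simp add: D_def vec_eq_iff)
  moreover have "trace D = of_nat (card S)"
    by (simp add: trace_def D_def sum.If_cases)
  moreover have "D $ s $ s \<noteq> 0"
    using \<open>s \<in> S\<close> by (simp add: D_def)
  ultimately show ?thesis
    using S by (intro exI[of _ D]) auto
qed

(* Trace of an idempotent.  Write every column of P in a basis B of its fixed space;
   the trace is the sum over B of the b-coordinate of P b, which is 1 for each b. *)

lemma coefficient_of_basis_vector:
  fixes B :: "('a::field^'n) set"
  assumes indep: "vec.independent B" and "b \<in> B" and expansion: "(\<Sum>v\<in>B. d v *s v) = b"
  shows "d b = 1"
proof -
  have "finite B" using indep vec.finiteI_independent by blast
  have "(\<Sum>v\<in>B. (if v = b then 1 else 0) *s v) = b"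
    using \<open>finite B\<close> \<open>b \<in> B\<close> by (simp add: if_distrib[of "\<lambda>c. c *s _"] cong: if_cong)
  then have "(\<Sum>v\<in>B. (d v - (if v = b then 1 else 0)) *s v) = 0"
    using expansion by (simp add: sum_subtractf)
  then have "d b - 1 = 0"
    using indep \<open>b \<in> B\<close> unfolding vec.independent_explicit by fastforce
  then show ?thesis by simp
qed

lemma trace_by_column_coordinates:
  fixes P :: "'a::field^'n^'n"
  assumes "\<And>j. column j P = (\<Sum>b\<in>B. c j b *s b)"
  shows "trace P = (\<Sum>b\<in>B. \<Sum>j\<in>UNIV. b $ j * c j b)"
proof -
  have "P $ i $ i = (\<Sum>b\<in>B. c i b * b $ i)" for i
    using arg_cong[OF assms[of i], of "\<lambda>x. x $ i"] by (simp add: column_def)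
  then have "trace P = (\<Sum>i\<in>UNIV. \<Sum>b\<in>B. c i b * b $ i)"
    by (simp add: trace_def)
  also have "\<dots> = (\<Sum>b\<in>B. \<Sum>j\<in>UNIV. b $ j * c j b)"
    by (subst sum.swap) (simp add: mult.commute)
  finally show ?thesis .
qed

lemma fixed_vector_coordinate:
  fixes P :: "'a::field^'n^'n"
  assumes columns: "\<And>j. column j P = (\<Sum>b\<in>B. c j b *s b)"
    and indep: "vec.independent B" and "b \<in> B" and fixed: "P *v b = b"
  shows "(\<Sum>j\<in>UNIV. b $ j * c j b) = 1"
proof (rule coefficient_of_basis_vector[OF indep \<open>b \<in> B\<close>,
    where d = "\<lambda>b'. \<Sum>j\<in>UNIV. b $ j * c j b'"])
  have "b = P *v b" using fixed by simp
  also have "\<dots> = (\<Sum>j\<in>UNIV. b $ j *s (\<Sum>b'\<in>B. c j b' *s b'))"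
    by (simp add: matrix_mult_sum columns)
  also have "\<dots> = (\<Sum>b'\<in>B. (\<Sum>j\<in>UNIV. b $ j * c j b') *s b')"
    by (simp add: vec_eq_iff sum_distrib_left sum_distrib_right mult.assoc sum.swap[of _ B])
  finally show "(\<Sum>b'\<in>B. (\<Sum>j\<in>UNIV. b $ j * c j b') *s b') = b" by simp
qed

lemma idempotent_trace:
  fixes P :: "'a::field^'n^'n"
  assumes idem: "P ** P = P"
  obtains r where "r \<le> CARD('n)" and "trace P = of_nat r" and "r = 0 \<Longrightarrow> P = 0"
proof -
  define V where "V = {x. P *v x = x}"
  obtain B where "B \<subseteq> V" and indep: "vec.independent B" and "V \<subseteq> vec.span B"
    and "card B = vec.dim V"
    using vec.basis_exists by blast
  have "finite B" using indep vec.finiteI_independent by blast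
  have "card B \<le> CARD('n)"
    using \<open>card B = vec.dim V\<close> dim_subset_UNIV_cart_gen by metis
  have "\<forall>j. \<exists>cj. column j P = (\<Sum>b\<in>B. cj b *s b)"
  proof
    fix j
    have "column j P \<in> V"
      using idem column_mult[of j P P] by (simp add: V_def)
    then show "\<exists>cj. column j P = (\<Sum>b\<in>B. cj b *s b)"
      using \<open>V \<subseteq> vec.span B\<close> vec.span_finite[OF \<open>finite B\<close>] by blast
  qed
  then obtain c where c: "\<And>j. column j P = (\<Sum>b\<in>B. c j b *s b)" by metis
  have "trace P = (\<Sum>b\<in>B. \<Sum>j\<in>UNIV. b $ j * c j b)"
    by (rule trace_by_column_coordinates[OF c])
  also have "\<dots> = (\<Sum>b\<in>B. 1)"
  proof (rule sum.cong)
    fix b assume "b \<in> B"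
    then have "P *v b = b" using \<open>B \<subseteq> V\<close> by (auto simp: V_def)
    then show "(\<Sum>j\<in>UNIV. b $ j * c j b) = 1"
      by (rule fixed_vector_coordinate[OF c indep \<open>b \<in> B\<close>])
  qed simp
  finally have "trace P = of_nat (card B)" by simp
  moreover have "P = 0" if "card B = 0"
  proof -
    have "column j P = 0" for j
      using c[of j] that \<open>finite B\<close> by simp
    then show ?thesis by (simp add: column_def vec_eq_iff)
  qed
  ultimately show ?thesis
    by (rule that[OF \<open>card B \<le> CARD('n)\<close>])
qed

(* In characteristic 0 or > n the rank r <= n of an idempotent is detected by its
   trace of_nat r. *)

lemma idempotent_trace_zero:
  fixes P :: "'a::field^'n^'n"
  assumes char: "CHAR('a) = 0 \<or> CHAR('a) > CARD('n)" and "P ** P = P" and "trace P = 0"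
  shows "P = 0"
proof -
  obtain r where "r \<le> CARD('n)" and "trace P = of_nat r" and zero: "r = 0 \<Longrightarrow> P = 0"
    by (rule idempotent_trace[OF assms(2)]) auto
  then have "CHAR('a) dvd r"
    using assms(3) by (simp add: of_nat_eq_0_iff_char_dvd)
  then have "r = 0"
    using char \<open>r \<le> CARD('n)\<close> by (auto dest: dvd_imp_le)
  then show ?thesis by (rule zero)
qed

inductive_set poly_span :: "'a::field^'n^'n \<Rightarrow> ('a^'n^'n) set" for A where
  power: "matpow A i \<in> poly_span A"
| add: "M \<in> poly_span A \<Longrightarrow> N \<in> poly_span A \<Longrightarrow> M + N \<in> poly_span A"
| scale: "M \<in> poly_span A \<Longrightarrow> msmult c M \<in> poly_span A"

lemma poly_span_self: "A \<in> poly_span A"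
  using poly_span.power[of A 1] by simp

lemma poly_span_sum:
  "finite I \<Longrightarrow> (\<And>i. i \<in> I \<Longrightarrow> f i \<in> poly_span A) \<Longrightarrow> sum f I \<in> poly_span A"
proof (induction I rule: finite_induct)
  case empty
  have "msmult 0 (matpow A 0) \<in> poly_span A" by (intro poly_span.scale poly_span.power)
  then show ?case by (simp add: msmult_zero)
qed (simp add: poly_span.add)

lemma power_mult_poly_span: "M \<in> poly_span A \<Longrightarrow> matpow A i ** M \<in> poly_span A"
proof (induction M rule: poly_span.induct)
  case (power j)
  show ?case
    using poly_span.power[of A "i + j"] by (simp add: matpow_add)
qed (simp_all add: matrix_add_ldistrib msmult_mult_right poly_span.add poly_span.scale)

lemma power_comm_poly_span: "M \<in> poly_span A \<Longrightarrow> matpow A i ** M = M ** matpow A i"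
proof (induction M rule: poly_span.induct)
  case (power j)
  show ?case
    using matpow_add[of A i j] matpow_add[of A j i] by (simp add: add.commute)
qed (simp_all add: matrix_add_ldistrib matrix_add_rdistrib msmult_mult_left msmult_mult_right)

lemma poly_span_mult: "M \<in> poly_span A \<Longrightarrow> N \<in> poly_span A \<Longrightarrow> M ** N \<in> poly_span A"
proof (induction M rule: poly_span.induct)
  case (power i)
  then show ?case by (rule power_mult_poly_span)
qed (simp_all add: matrix_add_rdistrib msmult_mult_left poly_span.add poly_span.scale)

lemma poly_span_comm: "M \<in> poly_span A \<Longrightarrow> N \<in> poly_span A \<Longrightarrow> M ** N = N ** M"
proof (induction M rule: poly_span.induct)
  case (power i)
  then show ?case by (rule power_comm_poly_span)
qed (simp_all add: matrix_add_ldistrib matrix_add_rdistrib msmult_mult_left msmult_mult_right)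

lemma poly_span_matpow: "M \<in> poly_span A \<Longrightarrow> matpow M m \<in> poly_span A"
  by (induction m) (simp_all add: poly_span.power[of A 0, simplified] poly_span_mult)

lemma commute_matpow: "M ** N = N ** M \<Longrightarrow> N ** matpow M m = matpow M m ** N"
proof (induction m)
  case (Suc m)
  have "N ** matpow M (Suc m) = (N ** M) ** matpow M m"
    by (simp add: matrix_mul_assoc)
  also have "\<dots> = M ** (N ** matpow M m)"
    using Suc.prems by (simp add: matrix_mul_assoc)
  also have "\<dots> = matpow M (Suc m) ** N"
    using Suc by (simp add: matrix_mul_assoc)
  finally show ?case .
qed simp

lemma matpow_mult_commuting:
  assumes "M ** N = N ** M"
  shows "matpow (M ** N) m = matpow M m ** matpow N m"
proof (induction m)
  case (Suc m)
  have "matpow (M ** N) (Suc m) = M ** (N ** matpow M m) ** matpow N m"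
    using Suc by (simp add: matrix_mul_assoc)
  also have "\<dots> = matpow M (Suc m) ** matpow N (Suc m)"
    using commute_matpow[OF assms] by (simp add: matrix_mul_assoc)
  finally show ?case .
qed simp

lemma trace_power_mult_poly_span:
  assumes traces: "\<forall>m\<ge>1. trace (matpow A m) = 0"
  shows "M \<in> poly_span A \<Longrightarrow> m \<ge> 1 \<Longrightarrow> trace (matpow A m ** M) = 0"
proof (induction M rule: poly_span.induct)
  case (power j)
  then show ?case using traces by (simp flip: matpow_add)
next
  case (add M N)
  then show ?case by (simp add: matrix_add_ldistrib trace_add)
next
  case (scale M c)
  then show ?case by (simp add: msmult_mult_right trace_msmult)
qed

(* A linear relation among powers of A gives A^k = A^k A R with R in K[A]: divide by
   the coefficient of the lowest power k that occurs and factor A^(k+1) out of the rest. *)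

lemma matpow_split: "k < i \<Longrightarrow> matpow A i = matpow A k ** (A ** matpow A (i - k - 1))"
  using matpow_add[of A k "Suc (i - k - 1)"] by simp

lemma higher_powers_factor:
  assumes "\<And>i. i \<in> I \<Longrightarrow> k < i"
  shows "(\<Sum>i\<in>I. msmult (a i) (matpow A i))
    = matpow A k ** (A ** (\<Sum>i\<in>I. msmult (a i) (matpow A (i - k - 1))))"
proof -
  have "(\<Sum>i\<in>I. msmult (a i) (matpow A i))
      = (\<Sum>i\<in>I. matpow A k ** (A ** msmult (a i) (matpow A (i - k - 1))))"
    by (rule sum.cong) (simp_all add: matpow_split[OF assms] msmult_mult_right)
  then show ?thesis by (simp add: matrix_mul_sum_right)
qed

lemma recurrence_from_relation:
  fixes A :: "'a::field^'n^'n"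
  assumes "finite I" and "i0 \<in> I" and "a i0 \<noteq> 0"
    and relation: "(\<Sum>i\<in>I. msmult (a i) (matpow A i)) = 0"
  shows "\<exists>k R. R \<in> poly_span A \<and> matpow A k = matpow A k ** (A ** R)"
proof -
  define I' where "I' = {i\<in>I. a i \<noteq> 0}"
  have "finite I'" and "i0 \<in> I'" using assms by (simp_all add: I'_def)
  define k where "k = Min I'"
  have "k \<in> I'" using \<open>finite I'\<close> \<open>i0 \<in> I'\<close> unfolding k_def by (intro Min_in) auto
  then have "a k \<noteq> 0" by (simp add: I'_def)
  have above_k: "k < i" if "i \<in> I' - {k}" for i
  proof -
    have "k \<le> i" using \<open>finite I'\<close> that unfolding k_def by simp
    then show ?thesis using that by simp
  qed
  define R where "R = (\<Sum>i\<in>I' - {k}. msmult (a i) (matpow A (i - k - 1)))"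
  have "R \<in> poly_span A"
    unfolding R_def using \<open>finite I'\<close> by (intro poly_span_sum poly_span.scale poly_span.power) simp
  have "(\<Sum>i\<in>I'. msmult (a i) (matpow A i)) = (\<Sum>i\<in>I. msmult (a i) (matpow A i))"
    by (rule sum.mono_neutral_left) (auto simp: assms(1) I'_def msmult_zero)
  then have "msmult (a k) (matpow A k) = - (matpow A k ** (A ** R))"
    using relation higher_powers_factor[of "I' - {k}" k a A, OF above_k] \<open>finite I'\<close> \<open>k \<in> I'\<close>
    by (simp add: sum.remove eq_neg_iff_add_eq_0 R_def)
  then have "msmult (1 / a k) (msmult (a k) (matpow A k))
      = msmult (1 / a k) (- (matpow A k ** (A ** R)))"
    by simp
  then have "matpow A k = msmult (- (1 / a k)) (matpow A k ** (A ** R))"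
    using \<open>a k \<noteq> 0\<close> by (simp add: msmult_msmult msmult_one msmult_neg)
  also have "\<dots> = matpow A k ** (A ** msmult (- (1 / a k)) R)"
    by (simp add: msmult_mult_right)
  finally show ?thesis
    using \<open>R \<in> poly_span A\<close> by (blast intro: poly_span.scale)
qed

(* Such a relation exists: either two of A^0, ..., A^N (N = n^2) coincide, or these
   N + 1 matrices, flattened to vectors of length N, are linearly dependent. *)

definition flatten :: "'a::field^'n^'m \<Rightarrow> 'a^('m \<times> 'n)" where
  "flatten M = (\<chi> p. M $ fst p $ snd p)"

lemma flatten_eq_iff: "flatten M = flatten N \<longleftrightarrow> M = N"
  by (simp add: flatten_def vec_eq_iff)

lemma flatten_zero: "flatten 0 = 0"
  by (simp add: flatten_def vec_eq_iff)

lemma flatten_sum: "flatten (sum f I) = (\<Sum>i\<in>I. flatten (f i))"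
  by (simp add: flatten_def vec_eq_iff)

lemma flatten_msmult: "flatten (msmult c M) = c *s flatten M"
  by (simp add: flatten_def msmult_def vec_eq_iff)

lemma relation_of_dependent_image:
  fixes f :: "nat \<Rightarrow> 'a::field^'m"
  assumes inj: "inj_on f I0" and "vec.dependent (f ` I0)"
  obtains I a i0 where "finite I" and "i0 \<in> I" and "a i0 \<noteq> 0"
    and "(\<Sum>i\<in>I. a i *s f i) = 0"
proof -
  obtain T u v where "finite T" and "T \<subseteq> f ` I0" and T_sum: "(\<Sum>w\<in>T. u w *s w) = 0"
    and "v \<in> T" and "u v \<noteq> 0"
    using assms(2) unfolding vec.dependent_explicit by blast
  define I where "I = {i \<in> I0. f i \<in> T}"
  have T_eq: "T = f ` I" using \<open>T \<subseteq> f ` I0\<close> by (auto simp: I_def)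
  have inj_I: "inj_on f I" using inj by (rule inj_on_subset) (auto simp: I_def)
  have "finite I" using \<open>finite T\<close> T_eq finite_image_iff[OF inj_I] by simp
  obtain i0 where "i0 \<in> I" and "f i0 = v" using \<open>v \<in> T\<close> T_eq by blast
  have "u (f i0) \<noteq> 0" using \<open>f i0 = v\<close> \<open>u v \<noteq> 0\<close> by simp
  have "(\<Sum>i\<in>I. u (f i) *s f i) = 0"
    using T_sum unfolding T_eq by (simp add: sum.reindex[OF inj_I])
  with \<open>finite I\<close> \<open>i0 \<in> I\<close> \<open>u (f i0) \<noteq> 0\<close> show ?thesis
    by (rule that[of I i0 "\<lambda>i. u (f i)"])
qed

lemma powers_relation:
  fixes A :: "'a::field^'n^'n"
  obtains I a i0 where "finite I" and "i0 \<in> I" and "a i0 \<noteq> 0"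
    and "(\<Sum>i\<in>I. msmult (a i) (matpow A i)) = 0"
proof (cases "inj_on (matpow A) {..CARD('n \<times> 'n)}")
  case False
  then obtain i j where "i \<noteq> j" and "matpow A i = matpow A j"
    by (auto simp: inj_on_def)
  then have "(\<Sum>l\<in>{i, j}. msmult (if l = i then 1 else - 1) (matpow A l)) = 0"
    by (simp add: msmult_one msmult_minus_one)
  then show ?thesis
    by (intro that[of "{i, j}" i "\<lambda>l. if l = i then 1 else - 1"]) simp_all
next
  case True
  define f where "f i = flatten (matpow A i)" for i
  have inj_f: "inj_on f {..CARD('n \<times> 'n)}"
    using True by (simp add: inj_on_def f_def flatten_eq_iff)
  have "vec.dim (f ` {..CARD('n \<times> 'n)}) < card (f ` {..CARD('n \<times> 'n)})"
    using dim_subset_UNIV_cart_gen[of "f ` {..CARD('n \<times> 'n)}"] card_image[OF inj_f] by simp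
  then have "vec.dependent (f ` {..CARD('n \<times> 'n)})"
    by (intro vec.dependent_biggerset_general)
  then obtain I a i0 where "finite I" and "i0 \<in> I" and "a i0 \<noteq> 0"
    and flat_relation: "(\<Sum>i\<in>I. a i *s f i) = 0"
    by (rule relation_of_dependent_image[OF inj_f])
  have "flatten (\<Sum>i\<in>I. msmult (a i) (matpow A i)) = flatten 0"
    using flat_relation by (simp add: flatten_sum flatten_msmult flatten_zero f_def)
  then have "(\<Sum>i\<in>I. msmult (a i) (matpow A i)) = 0"
    by (simp only: flatten_eq_iff)
  with \<open>finite I\<close> \<open>i0 \<in> I\<close> \<open>a i0 \<noteq> 0\<close> show ?thesis
    by (rule that)
qed

lemma power_recurrence:
  fixes A :: "'a::field^'n^'n"
  shows "\<exists>k R. R \<in> poly_span A \<and> matpow A k = matpow A k ** (A ** R)"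
proof -
  obtain I a i0 where "finite I" and "i0 \<in> I" and "a i0 \<noteq> 0"
    and "(\<Sum>i\<in>I. msmult (a i) (matpow A i)) = 0"
    by (rule powers_relation)
  then show ?thesis by (rule recurrence_from_relation)
qed

(* From A^k = A^k (A R) with R in K[A], the power P = (A R)^k satisfies A^k = A^k P,
   and P is idempotent: P P = P A^k R^k = A^k P R^k = A^k R^k = P. *)

lemma recurrence_idempotent:
  fixes A :: "'a::field^'n^'n"
  assumes R: "R \<in> poly_span A" and recurrence: "matpow A k = matpow A k ** (A ** R)"
  shows "matpow A k = matpow A k ** matpow (A ** R) k"
    and "matpow (A ** R) k ** matpow (A ** R) k = matpow (A ** R) k"
proof -
  define T where "T = A ** R"
  have absorb: "matpow A k = matpow A k ** matpow T j" for j
  proof (induction j)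
    case (Suc j)
    have "matpow A k ** matpow T (Suc j) = (matpow A k ** T) ** matpow T j"
      by (simp add: matrix_mul_assoc)
    then show ?case using Suc recurrence by (simp add: T_def)
  qed simp
  then show "matpow A k = matpow A k ** matpow (A ** R) k"
    by (simp add: T_def)
  define P where "P = matpow T k"
  have "P \<in> poly_span A"
    unfolding P_def T_def by (intro poly_span_matpow poly_span_mult poly_span_self R)
  have P_factor: "P = matpow A k ** matpow R k"
    unfolding P_def T_def by (rule matpow_mult_commuting[OF poly_span_comm[OF poly_span_self R]])
  have "P ** P = P ** (matpow A k ** matpow R k)"
    by (simp only: P_factor[symmetric])
  also have "\<dots> = (matpow A k ** P) ** matpow R k"
    using poly_span_comm[OF \<open>P \<in> poly_span A\<close> poly_span.power[of A k]]
    by (simp add: matrix_mul_assoc)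
  also have "matpow A k ** P = matpow A k"
    using absorb by (simp add: P_def)
  finally show "matpow (A ** R) k ** matpow (A ** R) k = matpow (A ** R) k"
    using P_factor by (simp add: P_def T_def)
qed

(* With k >= 1 the idempotent (A R)^k
   lies in A K[A], so it has trace zero and therefore vanishes, and so does A^k. *)

lemma nilpotent_if_power_traces_vanish:
  fixes A :: "'a::field^'n^'n"
  assumes traces: "\<forall>m\<ge>1. trace (matpow A m) = 0"
    and char: "CHAR('a) = 0 \<or> CHAR('a) > CARD('n)"
  shows "\<exists>K. \<forall>m\<ge>K. matpow A m = 0"
proof -
  obtain k0 R where R: "R \<in> poly_span A" and recurrence: "matpow A k0 = matpow A k0 ** (A ** R)"
    using power_recurrence by blast
  define k where "k = Suc k0"
  have "A ** matpow A k0 = A ** (matpow A k0 ** (A ** R))"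
    using arg_cong[where f = "\<lambda>X. A ** X", OF recurrence] .
  then have "matpow A k = matpow A k ** (A ** R)"
    by (simp add: k_def matrix_mul_assoc)
  define P where "P = matpow (A ** R) k"
  have absorb: "matpow A k = matpow A k ** P" and idem: "P ** P = P"
    using recurrence_idempotent[OF R \<open>matpow A k = matpow A k ** (A ** R)\<close>]
    by (simp_all add: P_def)
  have "trace P = 0"
  proof -
    have "P = matpow A 1 ** (R ** matpow (A ** R) k0)"
      by (simp add: P_def k_def matrix_mul_assoc)
    moreover have "R ** matpow (A ** R) k0 \<in> poly_span A"
      by (intro poly_span_mult poly_span_matpow poly_span_self R)
    ultimately show ?thesis
      using trace_power_mult_poly_span[OF traces, of "R ** matpow (A ** R) k0" 1] by simp
  qed
  with idem have "P = 0"
    by (rule idempotent_trace_zero[OF char])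
  then have "matpow A k = 0"
    using absorb by simp
  then have "matpow A m = 0" if "m \<ge> k" for m
    using matpow_add[of A "m - k" k] that by simp
  then show ?thesis by blast
qed

lemma theta_mathieu_if_nil_powers:
  fixes J :: "('a::field^'n^'n) set"
  assumes "msubspace J"
    and nil: "\<And>a. \<forall>m\<ge>1. matpow a m \<in> J \<Longrightarrow> \<exists>K. \<forall>m\<ge>K. matpow a m = 0"
  shows "theta_mathieu th J"
proof -
  have "0 \<in> J" using assms(1) by (simp add: msubspace_def)
  have eventually_in: "\<exists>N. \<forall>m\<ge>N. f (matpow a m) \<in> J"
    if powers: "\<forall>m\<ge>1. matpow a m \<in> J" and "f 0 = 0" for a and f :: "'a^'n^'n \<Rightarrow> 'a^'n^'n"
  proof -
    obtain K where "\<forall>m\<ge>K. matpow a m = 0" using nil[OF powers] by blast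
    then show ?thesis using \<open>0 \<in> J\<close> \<open>f 0 = 0\<close> by (intro exI[of _ K]) auto
  qed
  have "left_mathieu J"
    unfolding left_mathieu_def
  proof (intro conjI assms(1) allI impI)
    fix a b :: "'a^'n^'n"
    assume "\<forall>m\<ge>1. matpow a m \<in> J"
    then show "\<exists>N. \<forall>m\<ge>N. b ** matpow a m \<in> J"
      using eventually_in[of a "\<lambda>x. b ** x"] by simp
  qed
  moreover have "right_mathieu J"
    unfolding right_mathieu_def
  proof (intro conjI assms(1) allI impI)
    fix a c :: "'a^'n^'n"
    assume "\<forall>m\<ge>1. matpow a m \<in> J"
    then show "\<exists>N. \<forall>m\<ge>N. matpow a m ** c \<in> J"
      using eventually_in[of a "\<lambda>x. x ** c"] by simp
  qed
  moreover have "twosided_mathieu J"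
    unfolding twosided_mathieu_def
  proof (intro conjI assms(1) allI impI)
    fix a b c :: "'a^'n^'n"
    assume "\<forall>m\<ge>1. matpow a m \<in> J"
    then show "\<exists>N. \<forall>m\<ge>N. b ** matpow a m ** c \<in> J"
      using eventually_in[of a "\<lambda>x. b ** x ** c"] by simp
  qed
  ultimately show ?thesis by (cases th) simp_all
qed

lemma twosided_ideal_imp_left: "twosided_ideal J \<Longrightarrow> left_ideal J"
  unfolding twosided_ideal_def left_ideal_def
  using matrix_mul_rid by metis

lemma twosided_mathieu_imp_left: "twosided_mathieu J \<Longrightarrow> left_mathieu J"
  unfolding twosided_mathieu_def left_mathieu_def
  using matrix_mul_rid by metis

lemma theta_ideal_imp_one_sided: "theta_ideal th J \<Longrightarrow> left_ideal J \<or> right_ideal J"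
  by (cases th) (simp_all add: twosided_ideal_imp_left)

lemma theta_mathieu_imp_one_sided: "theta_mathieu th J \<Longrightarrow> left_mathieu J \<or> right_mathieu J"
  by (cases th) (simp_all add: twosided_mathieu_imp_left)

lemma theta_ideal_UNIV: "theta_ideal th (UNIV :: ('a::field^'n^'n) set)"
  by (cases th) (simp_all add: left_ideal_def right_ideal_def twosided_ideal_def msubspace_def)

lemma theta_mathieu_UNIV: "theta_mathieu th (UNIV :: ('a::field^'n^'n) set)"
  by (cases th) (simp_all add: left_mathieu_def right_mathieu_def twosided_mathieu_def msubspace_def)

theorem theta_ideal_trace_perp_iff:
  fixes Z :: "'a::field^'n^'n"
  assumes "CARD('n) \<ge> 2"
  shows "theta_ideal th (trace_perp Z) \<longleftrightarrow> Z = 0"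
proof
  assume ideal: "theta_ideal th (trace_perp Z)"
  show "Z = 0"
  proof (rule ccontr)
    assume "Z \<noteq> 0"
    then have "\<not> left_ideal (trace_perp Z)" and "\<not> right_ideal (trace_perp Z)"
      using trace_perp_not_left_annihilated[OF assms] trace_perp_not_right_annihilated[OF assms]
        left_ideal_trace_perp_annihilates right_ideal_trace_perp_annihilates by blast+
    then show False using theta_ideal_imp_one_sided[OF ideal] by blast
  qed
qed (simp add: trace_perp_0 theta_ideal_UNIV)

lemma nonscalar_not_mathieu:
  fixes Z :: "'a::field^'n^'n"
  assumes "\<And>c. Z \<noteq> mat c"
  shows "\<not> left_mathieu (trace_perp Z) \<and> \<not> right_mathieu (trace_perp Z)"
  using nonscalar_left_idempotent[OF assms] nonscalar_right_idempotent[OF assms]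
    trace_perp_not_left_mathieu trace_perp_not_right_mathieu by blast

lemma small_char_scalar_not_mathieu:
  assumes "0 < CHAR('a::field)" and "CHAR('a) \<le> CARD('n)" and "(c::'a) \<noteq> 0"
  shows "\<not> left_mathieu (trace_perp (mat c :: 'a^'n^'n))
    \<and> \<not> right_mathieu (trace_perp (mat c :: 'a^'n^'n))"
proof -
  obtain e :: "'a^'n^'n" where "e ** e = e" and "trace e = 0" and "e \<noteq> 0"
    using small_char_idempotent[OF assms(1,2)] by blast
  moreover have "msmult c e \<noteq> 0"
    using \<open>e \<noteq> 0\<close> assms(3) by (auto simp: msmult_def vec_eq_iff)
  ultimately show ?thesis
    using trace_perp_not_left_mathieu[of e "mat c"] trace_perp_not_right_mathieu[of e "mat c"]
    by (simp add: mult_mat_eq_msmult mat_mult_eq_msmult trace_msmult)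
qed

lemma scalar_theta_mathieu:
  assumes char: "CHAR('a::field) = 0 \<or> CHAR('a) > CARD('n)" and "(c::'a) \<noteq> 0"
  shows "theta_mathieu th (trace_perp (mat c :: 'a^'n^'n))"
proof (rule theta_mathieu_if_nil_powers[OF msubspace_trace_perp])
  fix a :: "'a^'n^'n"
  assume "\<forall>m\<ge>1. matpow a m \<in> trace_perp (mat c)"
  then have "\<forall>m\<ge>1. trace (matpow a m) = 0"
    by (simp add: trace_perp_mat[OF assms(2)])
  then show "\<exists>K. \<forall>m\<ge>K. matpow a m = 0"
    by (rule nilpotent_if_power_traces_vanish[OF _ char])
qed

theorem theta_mathieu_trace_perp_iff:
  fixes Z :: "'a::field^'n^'n"
  assumes "CHAR('a) = 0 \<or> CHAR('a) > CARD('n)"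
  shows "theta_mathieu th (trace_perp Z) \<longleftrightarrow> Z = 0 \<or> (\<exists>c. c \<noteq> 0 \<and> Z = mat c)"
proof
  assume mathieu: "theta_mathieu th (trace_perp Z)"
  have "\<not> (\<forall>c. Z \<noteq> mat c)"
    using nonscalar_not_mathieu theta_mathieu_imp_one_sided[OF mathieu] by blast
  then obtain c where "Z = mat c" by blast
  then show "Z = 0 \<or> (\<exists>c. c \<noteq> 0 \<and> Z = mat c)" by (cases "c = 0") auto
next
  assume "Z = 0 \<or> (\<exists>c. c \<noteq> 0 \<and> Z = mat c)"
  then show "theta_mathieu th (trace_perp Z)"
    using scalar_theta_mathieu[OF assms] by (auto simp: trace_perp_0 theta_mathieu_UNIV)
qed

theorem theta_mathieu_trace_perp_iff_small_char:
  fixes Z :: "'a::field^'n^'n"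
  assumes "0 < CHAR('a)" and "CHAR('a) \<le> CARD('n)"
  shows "theta_mathieu th (trace_perp Z) \<longleftrightarrow> Z = 0"
proof
  assume mathieu: "theta_mathieu th (trace_perp Z)"
  show "Z = 0"
  proof (rule ccontr)
    assume "Z \<noteq> 0"
    have "\<not> left_mathieu (trace_perp Z) \<and> \<not> right_mathieu (trace_perp Z)"
    proof (cases "\<exists>c. Z = mat c")
      case True
      then obtain c where "Z = mat c" by blast
      with \<open>Z \<noteq> 0\<close> have "c \<noteq> 0" by auto
      then show ?thesis
        using small_char_scalar_not_mathieu[OF assms] \<open>Z = mat c\<close> by simp
    next
      case False
      then show ?thesis using nonscalar_not_mathieu by blast
    qed
    then show False using theta_mathieu_imp_one_sided[OF mathieu] by blast
  qed
qed (simp add: trace_perp_0 theta_mathieu_UNIV)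

theorem proposition5p4:
  fixes X :: "'a::field^'n^'n" and th :: theta
  assumes "CARD('n) \<ge> 2"
  shows "((CHAR('a) = 0 \<or> CHAR('a) > CARD('n)) \<longrightarrow>
           sigma_theta th (HX X) = {Y. Y ** X = 0} \<and>
           tau_theta th (HX X) = {Y. Y ** X = 0 \<or> (\<exists>c. c \<noteq> 0 \<and> Y ** X = mat c)}) \<and>
         ((CHAR('a) > 0 \<and> CHAR('a) \<le> CARD('n)) \<longrightarrow>
           sigma_theta th (HX X) = {Y. Y ** X = 0} \<and>
           tau_theta th (HX X) = {Y. Y ** X = 0})"
proof -
  have sigma: "sigma_theta th (HX X) = {Y. Y ** X = 0}"
    by (simp add: sigma_theta_def colon_HX theta_ideal_trace_perp_iff[OF assms])
  have tau: "tau_theta th (HX X) = {Y. theta_mathieu th (trace_perp (Y ** X))}"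
    by (simp add: tau_theta_def colon_HX)
  show ?thesis
  proof (intro conjI impI sigma)
    assume "CHAR('a) = 0 \<or> CHAR('a) > CARD('n)"
    then show "tau_theta th (HX X) = {Y. Y ** X = 0 \<or> (\<exists>c. c \<noteq> 0 \<and> Y ** X = mat c)}"
      by (simp add: tau theta_mathieu_trace_perp_iff)
  next
    assume "CHAR('a) > 0 \<and> CHAR('a) \<le> CARD('n)"
    then show "tau_theta th (HX X) = {Y. Y ** X = 0}"
      by (simp add: tau theta_mathieu_trace_perp_iff_small_char)
  qed
qed

end
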